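(* Let $A$ be a partially symmetric associative 0-dialgebra with involution. On $A\oplus A$ define $(a,b)\dashv(c,d)=(a\dashv c-d\vdash b^\ast,\; a^\ast\dashv d+c\vdash b)$, $(a,b)\vdash(c,d)=(a\vdash c-d\dashv b^\ast,\; a^\ast\vdash d+c\dashv b)$ and $(a,b)^\ast=(a^\ast,-b)$. Then $A\oplus A$ with these operations is a partially symmetric alternative 0-dialgebra with involution.
   Context: A 0-dialgebra with involution is a vector space with bilinear operations $\dashv,\vdash$ satisfying $a\dashv(b\dashv c)=a\dashv(b\vdash c)$ and $(a\dashv b)\vdash c=(a\vdash b)\vdash c$, together with a linear map $\ast$ with $(a^\ast)^\ast=a$, $(a\dashv b)^\ast=b^\ast\vdash a^\ast$, $(a\vdash b)^\ast=b^\ast\dashv a^\ast$. Write $\mathrm{sym}(x)=x+x^\ast$ and $\{x,y\}=x\dashv y-y\vdash x$; it is partially symmetric if $\{\mathrm{sym}(x),y\}=0$ and $\{x,\mathrm{sym}(y)\}=0$ for all $x,y$. Associators: $(a,b,c)_\dashv=(a\dashv b)\dashv c-a\dashv(b\dashv c)$, $(a,b,c)_\times=(a\vdash b)\dashv c-a\vdash(b\dashv c)$, $(a,b,c)_\vdash=(a\vdash b)\vdash c-a\vdash(b\vdash c)$. The 0-dialgebra is associative if all three associators vanish identically, and alternative if $(a,b,c)_\dashv+(c,b,a)_\vdash=0$, $(a,b,c)_\dashv-(b,c,a)_\vdash=0$ and $(a,b,c)_\times+(a,c,b)_\vdash=0$ for all $a,b,c$. *)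

theory Defs
  imports Complex_Main "HOL-Library.Product_Plus"
begin

text \<open>Operations: L = left product (dashv),
  R = right product (vdash), st = involution.\<close>

definition bilinear_op :: "('k::field \<Rightarrow> 'a::ab_group_add \<Rightarrow> 'a) \<Rightarrow> ('a \<Rightarrow> 'a \<Rightarrow> 'a) \<Rightarrow> bool" where
  "bilinear_op sc f \<longleftrightarrow>
     (\<forall>x. Vector_Spaces.linear sc sc (f x)) \<and> (\<forall>y. Vector_Spaces.linear sc sc (\<lambda>x. f x y))"

definition zero_dialgebra ::
  "('k::field \<Rightarrow> 'a::ab_group_add \<Rightarrow> 'a) \<Rightarrow> ('a \<Rightarrow> 'a \<Rightarrow> 'a) \<Rightarrow> ('a \<Rightarrow> 'a \<Rightarrow> 'a) \<Rightarrow> bool" where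
  "zero_dialgebra sc L R \<longleftrightarrow>
     vector_space sc \<and> bilinear_op sc L \<and> bilinear_op sc R \<and>
     (\<forall>a b c. L a (L b c) = L a (R b c)) \<and>
     (\<forall>a b c. R (L a b) c = R (R a b) c)"

definition zero_dialgebra_inv ::
  "('k::field \<Rightarrow> 'a::ab_group_add \<Rightarrow> 'a) \<Rightarrow> ('a \<Rightarrow> 'a \<Rightarrow> 'a) \<Rightarrow> ('a \<Rightarrow> 'a \<Rightarrow> 'a) \<Rightarrow> ('a \<Rightarrow> 'a) \<Rightarrow> bool" where
  "zero_dialgebra_inv sc L R st \<longleftrightarrow>
     zero_dialgebra sc L R \<and> Vector_Spaces.linear sc sc st \<and>
     (\<forall>a. st (st a) = a) \<and>
     (\<forall>a b. st (L a b) = R (st b) (st a)) \<and>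
     (\<forall>a b. st (R a b) = L (st b) (st a))"

definition dsym :: "('a::ab_group_add \<Rightarrow> 'a) \<Rightarrow> 'a \<Rightarrow> 'a" where
  "dsym st x = x + st x"

definition dbracket :: "('a::ab_group_add \<Rightarrow> 'a \<Rightarrow> 'a) \<Rightarrow> ('a \<Rightarrow> 'a \<Rightarrow> 'a) \<Rightarrow> 'a \<Rightarrow> 'a \<Rightarrow> 'a" where
  "dbracket L R x y = L x y - R y x"

definition partially_symmetric ::
  "('a::ab_group_add \<Rightarrow> 'a \<Rightarrow> 'a) \<Rightarrow> ('a \<Rightarrow> 'a \<Rightarrow> 'a) \<Rightarrow> ('a \<Rightarrow> 'a) \<Rightarrow> bool" where
  "partially_symmetric L R st \<longleftrightarrow>
     (\<forall>x y. dbracket L R (dsym st x) y = 0) \<and> (\<forall>x y. dbracket L R x (dsym st y) = 0)"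

definition assoc_l :: "('a::ab_group_add \<Rightarrow> 'a \<Rightarrow> 'a) \<Rightarrow> ('a \<Rightarrow> 'a \<Rightarrow> 'a) \<Rightarrow> 'a \<Rightarrow> 'a \<Rightarrow> 'a \<Rightarrow> 'a" where
  "assoc_l L R a b c = L (L a b) c - L a (L b c)"

definition assoc_x :: "('a::ab_group_add \<Rightarrow> 'a \<Rightarrow> 'a) \<Rightarrow> ('a \<Rightarrow> 'a \<Rightarrow> 'a) \<Rightarrow> 'a \<Rightarrow> 'a \<Rightarrow> 'a \<Rightarrow> 'a" where
  "assoc_x L R a b c = L (R a b) c - R a (L b c)"

definition assoc_r :: "('a::ab_group_add \<Rightarrow> 'a \<Rightarrow> 'a) \<Rightarrow> ('a \<Rightarrow> 'a \<Rightarrow> 'a) \<Rightarrow> 'a \<Rightarrow> 'a \<Rightarrow> 'a \<Rightarrow> 'a" where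
  "assoc_r L R a b c = R (R a b) c - R a (R b c)"

definition dialg_associative :: "('a::ab_group_add \<Rightarrow> 'a \<Rightarrow> 'a) \<Rightarrow> ('a \<Rightarrow> 'a \<Rightarrow> 'a) \<Rightarrow> bool" where
  "dialg_associative L R \<longleftrightarrow>
     (\<forall>a b c. assoc_l L R a b c = 0 \<and> assoc_x L R a b c = 0 \<and> assoc_r L R a b c = 0)"

definition dialg_alternative :: "('a::ab_group_add \<Rightarrow> 'a \<Rightarrow> 'a) \<Rightarrow> ('a \<Rightarrow> 'a \<Rightarrow> 'a) \<Rightarrow> bool" where
  "dialg_alternative L R \<longleftrightarrow>
     (\<forall>a b c. assoc_l L R a b c + assoc_r L R c b a = 0 \<and>
              assoc_l L R a b c - assoc_r L R b c a = 0 \<and>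
              assoc_x L R a b c + assoc_r L R a c b = 0)"

definition dbl_scale :: "('k \<Rightarrow> 'a \<Rightarrow> 'a) \<Rightarrow> 'k \<Rightarrow> 'a \<times> 'a \<Rightarrow> 'a \<times> 'a" where
  "dbl_scale sc k p = (sc k (fst p), sc k (snd p))"

definition dbl_L :: "('a::ab_group_add \<Rightarrow> 'a \<Rightarrow> 'a) \<Rightarrow> ('a \<Rightarrow> 'a \<Rightarrow> 'a) \<Rightarrow> ('a \<Rightarrow> 'a)
    \<Rightarrow> 'a \<times> 'a \<Rightarrow> 'a \<times> 'a \<Rightarrow> 'a \<times> 'a" where
  "dbl_L L R st p q = (case p of (a, b) \<Rightarrow> case q of (c, d) \<Rightarrow>
      (L a c - R d (st b), L (st a) d + R c b))"

definition dbl_R :: "('a::ab_group_add \<Rightarrow> 'a \<Rightarrow> 'a) \<Rightarrow> ('a \<Rightarrow> 'a \<Rightarrow> 'a) \<Rightarrow> ('a \<Rightarrow> 'a)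
    \<Rightarrow> 'a \<times> 'a \<Rightarrow> 'a \<times> 'a \<Rightarrow> 'a \<times> 'a" where
  "dbl_R L R st p q = (case p of (a, b) \<Rightarrow> case q of (c, d) \<Rightarrow>
      (R a c - L d (st b), R (st a) d + L c b))"

definition dbl_star :: "('a::ab_group_add \<Rightarrow> 'a) \<Rightarrow> 'a \<times> 'a \<Rightarrow> 'a \<times> 'a" where
  "dbl_star st p = (st (fst p), - snd p)"

end

(*
  The double of a 0-dialgebra with involution is again one: each axiom of the double follows
  coordinatewise from the same axiom of A, and partial symmetry of the double reduces to that
  of A in the first coordinate.  For alternativity, expand the three identities on (a,b), (c,d),
  (e,f) using bilinearity, the involution and associativity of A.  In each coordinate what
  remains is a short sum of brackets {x + x*, y} and {x, y + y*}, possibly multiplied by a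
  further element, and these vanish by partial symmetry of A.
*)
theory Submission
  imports Defs
begin

lemma additive_if_linear: "Vector_Spaces.linear s1 s2 f \<Longrightarrow> additive f"
  by (simp add: additive_def Vector_Spaces.linear_iff)

lemma vector_space_dbl_scale:
  assumes "vector_space sc"
  shows "vector_space (dbl_scale sc)"
proof -
  interpret vector_space sc by (fact assms)
  show ?thesis
    by unfold_locales (simp_all add: dbl_scale_def scale_right_distrib scale_left_distrib)
qed

locale involutive_zero_dialgebra =
  fixes sc :: "'k::field \<Rightarrow> 'a::ab_group_add \<Rightarrow> 'a"
    and L R :: "'a \<Rightarrow> 'a \<Rightarrow> 'a"
    and st :: "'a \<Rightarrow> 'a"
  assumes zero_dialgebra_inv: "zero_dialgebra_inv sc L R st"
begin

abbreviation dL where "dL \<equiv> dbl_L L R st"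
abbreviation dR where "dR \<equiv> dbl_R L R st"

lemma vector_space_sc: "vector_space sc"
  and linear_L_right: "Vector_Spaces.linear sc sc (L x)"
  and linear_L_left: "Vector_Spaces.linear sc sc (\<lambda>x. L x y)"
  and linear_R_right: "Vector_Spaces.linear sc sc (R x)"
  and linear_R_left: "Vector_Spaces.linear sc sc (\<lambda>x. R x y)"
  and linear_st: "Vector_Spaces.linear sc sc st"
  and L_L_eq_L_R: "L x (L y z) = L x (R y z)"
  and R_L_eq_R_R: "R (L x y) z = R (R x y) z"
  and st_st: "st (st x) = x"
  and st_L: "st (L x y) = R (st y) (st x)"
  and st_R: "st (R x y) = L (st y) (st x)"
  using zero_dialgebra_inv
  unfolding zero_dialgebra_inv_def zero_dialgebra_def bilinear_op_def by auto

lemma additive_L_right: "additive (L x)"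
  and additive_L_left: "additive (\<lambda>x. L x y)"
  and additive_R_right: "additive (R x)"
  and additive_R_left: "additive (\<lambda>x. R x y)"
  and additive_st: "additive st"
  by (rule additive_if_linear,
      rule linear_L_right linear_L_left linear_R_right linear_R_left linear_st)+

lemmas expand_simps =
  additive.zero[OF additive_L_right] additive.add[OF additive_L_right]
  additive.minus[OF additive_L_right] additive.diff[OF additive_L_right]
  additive.zero[OF additive_L_left] additive.add[OF additive_L_left]
  additive.minus[OF additive_L_left] additive.diff[OF additive_L_left]
  additive.zero[OF additive_R_right] additive.add[OF additive_R_right]
  additive.minus[OF additive_R_right] additive.diff[OF additive_R_right]
  additive.zero[OF additive_R_left] additive.add[OF additive_R_left]
  additive.minus[OF additive_R_left] additive.diff[OF additive_R_left]
  additive.zero[OF additive_st] additive.add[OF additive_st]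
  additive.minus[OF additive_st] additive.diff[OF additive_st]
  st_st st_L st_R

lemma L_scale_right: "L x (sc k y) = sc k (L x y)"
  and L_scale_left: "L (sc k x) y = sc k (L x y)"
  and R_scale_right: "R x (sc k y) = sc k (R x y)"
  and R_scale_left: "R (sc k x) y = sc k (R x y)"
  and st_scale: "st (sc k x) = sc k (st x)"
  using linear_L_right linear_L_left linear_R_right linear_R_left linear_st
  by (simp_all add: Vector_Spaces.linear_iff)

sublocale scalars: vector_space sc
  by (fact vector_space_sc)

lemmas scale_simps = L_scale_right L_scale_left R_scale_right R_scale_left st_scale
  scalars.scale_right_distrib
  scalars.scale_right_diff_distrib

lemmas double_defs = dbl_L_def dbl_R_def dbl_star_def

lemma dbl_star_dbl_star: "dbl_star st (dbl_star st p) = p"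
  by (simp add: dbl_star_def st_st)

lemma dbl_star_dbl_L: "dbl_star st (dL p q) = dR (dbl_star st q) (dbl_star st p)"
  by (cases p, cases q) (simp add: double_defs expand_simps)

lemma dbl_star_dbl_R: "dbl_star st (dR p q) = dL (dbl_star st q) (dbl_star st p)"
  by (cases p, cases q) (simp add: double_defs expand_simps)

lemma dbl_L_dbl_L_eq_dbl_L_dbl_R: "dL p (dL q r) = dL p (dR q r)"
  by (cases p, cases q, cases r) (simp add: double_defs expand_simps L_L_eq_L_R R_L_eq_R_R)

lemma dbl_R_dbl_L_eq_dbl_R_dbl_R: "dR (dL p q) r = dR (dR p q) r"
  by (cases p, cases q, cases r) (simp add: double_defs expand_simps L_L_eq_L_R R_L_eq_R_R)

lemma bilinear_op_dbl_L: "bilinear_op (dbl_scale sc) dL"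
  unfolding bilinear_op_def Vector_Spaces.linear_iff
  by (auto simp: vector_space_dbl_scale vector_space_sc double_defs dbl_scale_def
      expand_simps scale_simps)

lemma bilinear_op_dbl_R: "bilinear_op (dbl_scale sc) dR"
  unfolding bilinear_op_def Vector_Spaces.linear_iff
  by (auto simp: vector_space_dbl_scale vector_space_sc double_defs dbl_scale_def
      expand_simps scale_simps)

lemma linear_dbl_star: "Vector_Spaces.linear (dbl_scale sc) (dbl_scale sc) (dbl_star st)"
  unfolding Vector_Spaces.linear_iff
  by (auto simp: vector_space_dbl_scale vector_space_sc double_defs dbl_scale_def
      expand_simps scale_simps)

theorem zero_dialgebra_inv_double:
  "zero_dialgebra_inv (dbl_scale sc) dL dR (dbl_star st)"
  unfolding zero_dialgebra_inv_def zero_dialgebra_def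
  by (simp add: vector_space_dbl_scale vector_space_sc bilinear_op_dbl_L bilinear_op_dbl_R
      linear_dbl_star dbl_star_dbl_star dbl_star_dbl_L dbl_star_dbl_R
      dbl_L_dbl_L_eq_dbl_L_dbl_R dbl_R_dbl_L_eq_dbl_R_dbl_R)

end

locale ps_involutive_zero_dialgebra = involutive_zero_dialgebra +
  assumes partially_symmetric: "partially_symmetric L R st"
begin

lemma dbracket_dsym_left: "dbracket L R (dsym st x) y = 0"
  and dbracket_dsym_right: "dbracket L R x (dsym st y) = 0"
  using partially_symmetric unfolding partially_symmetric_def by auto

theorem partially_symmetric_double: "partially_symmetric dL dR (dbl_star st)"
proof -
  have "dbracket dL dR (dsym (dbl_star st) (a, b)) (c, d) = (dbracket L R (dsym st a) c, 0)"
    and "dbracket dL dR (c, d) (dsym (dbl_star st) (a, b)) = (dbracket L R c (dsym st a), 0)"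
    for a b c d
    by (simp_all add: dbracket_def dsym_def double_defs expand_simps)
  then show ?thesis
    unfolding partially_symmetric_def split_paired_All
    by (simp add: dbracket_dsym_left dbracket_dsym_right zero_prod_def)
qed

end

locale ps_assoc_involutive_zero_dialgebra = ps_involutive_zero_dialgebra +
  assumes dialg_associative: "dialg_associative L R"
begin

lemma L_L_assoc: "L (L x y) z = L x (L y z)"
  and L_R_assoc: "L (R x y) z = R x (L y z)"
  and R_R_assoc: "R (R x y) z = R x (R y z)"
  using dialg_associative
  unfolding dialg_associative_def assoc_l_def assoc_x_def assoc_r_def by auto

lemma R_L_assoc: "R (L x y) z = R x (R y z)"
  by (simp add: R_L_eq_R_R R_R_assoc)

lemmas assoc_simps = L_L_assoc L_R_assoc R_R_assoc R_L_assoc L_L_eq_L_R[symmetric]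

lemmas double_assoc_defs = double_defs assoc_l_def assoc_x_def assoc_r_def dbracket_def dsym_def

(* The brackets are found by splitting each argument as (x, 0) + (0, y): of the eight resulting
   trilinear cases each contributes at most three of them, many contribute none. *)
lemma dbl_assoc_l_plus_assoc_r:
  "assoc_l dL dR (a, b) (c, d) (e, f) + assoc_r dL dR (e, f) (c, d) (a, b) =
   (dbracket L R a (dsym st (L d (st f))) - dbracket L R (dsym st (L b (st f))) (st c)
      - dbracket L R (dsym st (L b (st d))) e,
    L (dbracket L R (dsym st a) c) f - L (dbracket L R (st a) (dsym st c)) f
      - L (dbracket L R (dsym st a) e) d + L (dbracket L R a (dsym st e)) d
      - R (dbracket L R (dsym st c) e) b - R (dbracket L R (dsym st e) (st c)) b)"
  by (simp add: double_assoc_defs expand_simps assoc_simps algebra_simps)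

lemma dbl_assoc_l_minus_assoc_r:
  "assoc_l dL dR (a, b) (c, d) (e, f) - assoc_r dL dR (c, d) (e, f) (a, b) =
   (dbracket L R (dsym st (L b (st f))) c - dbracket L R (R f (st b)) (dsym st c)
      - dbracket L R (dsym st (L b (st d))) e + dbracket L R (L b (st d)) (dsym st e),
    - L (dbracket L R (dsym st a) (st c)) f - L (dbracket L R (dsym st a) e) d
      - R (dbracket L R (dsym st c) e) b - R (dbracket L R (dsym st e) (st c)) b
      - L b (dbracket L R (dsym st d) f) - L b (dbracket L R (dsym st f) d)
      - dbracket L R b (dsym st (L d (st f))))"
  by (simp add: double_assoc_defs expand_simps assoc_simps algebra_simps)

lemma dbl_assoc_x_plus_assoc_r:
  "assoc_x dL dR (a, b) (c, d) (e, f) + assoc_r dL dR (a, b) (e, f) (c, d) =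
   (- dbracket L R (dsym st (L d (st f))) a + dbracket L R (dsym st c) (L f (st b))
      - dbracket L R (L d (st b)) (dsym st e),
    L (dbracket L R (dsym st c) (st a)) f + R (dbracket L R (dsym st e) (st a)) d
      - L (dbracket L R (dsym st d) f) b + L (dbracket L R d (dsym st f)) b
      + dbracket L R (dsym st (L (st d) f)) b)"
  by (simp add: double_assoc_defs expand_simps assoc_simps algebra_simps)

theorem dialg_alternative_double: "dialg_alternative dL dR"
  unfolding dialg_alternative_def split_paired_All
  by (simp add: dbl_assoc_l_plus_assoc_r dbl_assoc_l_minus_assoc_r dbl_assoc_x_plus_assoc_r
      dbracket_dsym_left dbracket_dsym_right expand_simps zero_prod_def)

end

theorem theorem5p9:
  fixes sc :: "'k::field \<Rightarrow> 'a::ab_group_add \<Rightarrow> 'a"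
    and L R :: "'a \<Rightarrow> 'a \<Rightarrow> 'a"
    and st :: "'a \<Rightarrow> 'a"
  assumes "zero_dialgebra_inv sc L R st"
    and "partially_symmetric L R st"
    and "dialg_associative L R"
  shows "zero_dialgebra_inv (dbl_scale sc) (dbl_L L R st) (dbl_R L R st) (dbl_star st)
       \<and> partially_symmetric (dbl_L L R st) (dbl_R L R st) (dbl_star st)
       \<and> dialg_alternative (dbl_L L R st) (dbl_R L R st)"
proof -
  interpret ps_assoc_involutive_zero_dialgebra sc L R st
    by unfold_locales (fact assms)+
  show ?thesis
    using zero_dialgebra_inv_double partially_symmetric_double dialg_alternative_double
    by blast
qed

end
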